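(* Let $R$ be an NJ-symmetric ring and let $M$ be a maximal left ideal of $R$ which is not essential (as a left ideal). Then $M$ is a two-sided ideal of $R$. Likewise, if $M$ is a maximal right ideal of $R$ which is not essential (as a right ideal), then $M$ is a two-sided ideal of $R$.
   Context: Rings are associative with identity. $N(R)$ is the set of nilpotent elements, $J(R)$ the Jacobson radical. $R$ is NJ-symmetric if for all $a,b,c\in R$, $abc\in N(R)$ implies $bac\in J(R)$. *)

theory Defs
  imports Main
begin

definition nilpotents :: "'a::ring_1 set" where
  "nilpotents = {a. \<exists>n::nat. a ^ n = 0}"

definition left_ideal :: "'a::ring_1 set \<Rightarrow> bool" where
  "left_ideal I \<longleftrightarrow> 0 \<in> I \<and> (\<forall>x\<in>I. \<forall>y\<in>I. x + y \<in> I) \<and> (\<forall>x\<in>I. - x \<in> I)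
     \<and> (\<forall>r x. x \<in> I \<longrightarrow> r * x \<in> I)"

definition right_ideal :: "'a::ring_1 set \<Rightarrow> bool" where
  "right_ideal I \<longleftrightarrow> 0 \<in> I \<and> (\<forall>x\<in>I. \<forall>y\<in>I. x + y \<in> I) \<and> (\<forall>x\<in>I. - x \<in> I)
     \<and> (\<forall>r x. x \<in> I \<longrightarrow> x * r \<in> I)"

definition two_sided_ideal :: "'a::ring_1 set \<Rightarrow> bool" where
  "two_sided_ideal I \<longleftrightarrow> left_ideal I \<and> right_ideal I"

definition maximal_left_ideal :: "'a::ring_1 set \<Rightarrow> bool" where
  "maximal_left_ideal M \<longleftrightarrow> left_ideal M \<and> M \<noteq> UNIV \<and>
     (\<forall>I. left_ideal I \<and> M \<subseteq> I \<and> I \<noteq> UNIV \<longrightarrow> I = M)"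

definition maximal_right_ideal :: "'a::ring_1 set \<Rightarrow> bool" where
  "maximal_right_ideal M \<longleftrightarrow> right_ideal M \<and> M \<noteq> UNIV \<and>
     (\<forall>I. right_ideal I \<and> M \<subseteq> I \<and> I \<noteq> UNIV \<longrightarrow> I = M)"

definition jacobson :: "'a::ring_1 set" where
  "jacobson = \<Inter> {M. maximal_left_ideal M}"

definition NJ_symmetric :: "'a::ring_1 itself \<Rightarrow> bool" where
  "NJ_symmetric _ \<longleftrightarrow> (\<forall>a b c :: 'a. a * b * c \<in> nilpotents \<longrightarrow> b * a * c \<in> jacobson)"

definition essential_left_ideal :: "'a::ring_1 set \<Rightarrow> bool" where
  "essential_left_ideal M \<longleftrightarrow> left_ideal M \<and>
     (\<forall>L. left_ideal L \<and> L \<noteq> {0} \<longrightarrow> M \<inter> L \<noteq> {0})"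

definition essential_right_ideal :: "'a::ring_1 set \<Rightarrow> bool" where
  "essential_right_ideal M \<longleftrightarrow> right_ideal M \<and>
     (\<forall>L. right_ideal L \<and> L \<noteq> {0} \<longrightarrow> M \<inter> L \<noteq> {0})"

end

theory Submission
  imports Defs "HOL-Library.Set_Algebras"
begin

(* If M is not essential, some nonzero one-sided ideal L meets M trivially, and maximality
   gives M + L = R. Writing 1 = e + f with e in M and f in L yields orthogonal idempotents,
   and M is the annihilator of f.
   Left case: M = {x. x f = 0}. Each e r f squares to zero, so NJ-symmetry puts it into
   J(R), which lies in M; as e r f is also in L, it vanishes, and x r f = x e r f = 0 for x in M.
   Right case: M = {x. f x = 0}. If f r e were nonzero, then f r e R + M = R would give
   f = f r e t with r f e t = 0, so NJ-symmetry would put the idempotent f into J(R), forcing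
   f = 0. Hence f r e = 0, and r x = e r e x lies in M for x in M. *)

lemma left_ideal_mult: "left_ideal I \<Longrightarrow> x \<in> I \<Longrightarrow> r * x \<in> I"
  unfolding left_ideal_def by blast

lemma right_ideal_mult: "right_ideal I \<Longrightarrow> x \<in> I \<Longrightarrow> x * r \<in> I"
  unfolding right_ideal_def by blast

lemma left_ideal_diff: "left_ideal I \<Longrightarrow> x \<in> I \<Longrightarrow> y \<in> I \<Longrightarrow> x - y \<in> I"
  unfolding left_ideal_def by (metis diff_conv_add_uminus)

lemma right_ideal_diff: "right_ideal I \<Longrightarrow> x \<in> I \<Longrightarrow> y \<in> I \<Longrightarrow> x - y \<in> I"
  unfolding right_ideal_def by (metis diff_conv_add_uminus)

lemma left_ideal_eq_UNIV_iff: "left_ideal (I :: 'a::ring_1 set) \<Longrightarrow> I = UNIV \<longleftrightarrow> 1 \<in> I"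
  by (metis UNIV_I UNIV_eq_I left_ideal_mult mult.right_neutral)

lemma left_ideal_set_plus:
  assumes I: "left_ideal I" and J: "left_ideal J"
  shows "left_ideal (I + J)"
  unfolding left_ideal_def
proof (intro conjI ballI allI impI)
  show "0 \<in> I + J"
    using set_plus_intro[of 0 I 0 J] I J unfolding left_ideal_def by simp
  show "x + y \<in> I + J" if x: "x \<in> I + J" and y: "y \<in> I + J" for x y
  proof -
    obtain a b where "x = a + b" "a \<in> I" "b \<in> J" using x by (rule set_plus_elim)
    moreover obtain c d where "y = c + d" "c \<in> I" "d \<in> J" using y by (rule set_plus_elim)
    ultimately show ?thesis
      using set_plus_intro[of "a + c" I "b + d" J] I J
      unfolding left_ideal_def by (simp add: algebra_simps)
  qed
  show "- x \<in> I + J" if x: "x \<in> I + J" for x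
  proof -
    obtain a b where "x = a + b" "a \<in> I" "b \<in> J" using x by (rule set_plus_elim)
    then show ?thesis
      using set_plus_intro[of "- a" I "- b" J] I J unfolding left_ideal_def by simp
  qed
  show "r * x \<in> I + J" if x: "x \<in> I + J" for r x
  proof -
    obtain a b where "x = a + b" "a \<in> I" "b \<in> J" using x by (rule set_plus_elim)
    then show ?thesis
      using set_plus_intro[of "r * a" I "r * b" J] I J unfolding left_ideal_def
      by (simp add: distrib_left)
  qed
qed

lemma right_ideal_set_plus:
  assumes I: "right_ideal I" and J: "right_ideal J"
  shows "right_ideal (I + J)"
  unfolding right_ideal_def
proof (intro conjI ballI allI impI)
  show "0 \<in> I + J"
    using set_plus_intro[of 0 I 0 J] I J unfolding right_ideal_def by simp
  show "x + y \<in> I + J" if x: "x \<in> I + J" and y: "y \<in> I + J" for x y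
  proof -
    obtain a b where "x = a + b" "a \<in> I" "b \<in> J" using x by (rule set_plus_elim)
    moreover obtain c d where "y = c + d" "c \<in> I" "d \<in> J" using y by (rule set_plus_elim)
    ultimately show ?thesis
      using set_plus_intro[of "a + c" I "b + d" J] I J
      unfolding right_ideal_def by (simp add: algebra_simps)
  qed
  show "- x \<in> I + J" if x: "x \<in> I + J" for x
  proof -
    obtain a b where "x = a + b" "a \<in> I" "b \<in> J" using x by (rule set_plus_elim)
    then show ?thesis
      using set_plus_intro[of "- a" I "- b" J] I J unfolding right_ideal_def by simp
  qed
  show "x * r \<in> I + J" if x: "x \<in> I + J" for r x
  proof -
    obtain a b where "x = a + b" "a \<in> I" "b \<in> J" using x by (rule set_plus_elim)
    then show ?thesis
      using set_plus_intro[of "a * r" I "b * r" J] I J unfolding right_ideal_def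
      by (simp add: distrib_right)
  qed
qed

lemma left_ideal_principal: "left_ideal (range (\<lambda>r. r * a))"
  unfolding left_ideal_def
proof (intro conjI ballI allI impI)
  show "0 \<in> range (\<lambda>r. r * a)"
    using rangeI[of "\<lambda>r. r * a" 0] by simp
  show "x + y \<in> range (\<lambda>r. r * a)" if x: "x \<in> range (\<lambda>r. r * a)" and y: "y \<in> range (\<lambda>r. r * a)" for x y
  proof -
    obtain s t where "x = s * a" "y = t * a"
      using x y by blast
    then show ?thesis
      using rangeI[of "\<lambda>r. r * a" "s + t"] by (simp add: distrib_right)
  qed
  show "- x \<in> range (\<lambda>r. r * a)" if x: "x \<in> range (\<lambda>r. r * a)" for x
  proof -
    obtain s where "x = s * a"
      using x by blast
    then show ?thesis
      using rangeI[of "\<lambda>r. r * a" "- s"] by simp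
  qed
  show "r * x \<in> range (\<lambda>r. r * a)" if x: "x \<in> range (\<lambda>r. r * a)" for r x
  proof -
    obtain s where "x = s * a"
      using x by blast
    then show ?thesis
      using rangeI[of "\<lambda>r. r * a" "r * s"] by (simp add: mult.assoc)
  qed
qed

lemma right_ideal_principal: "right_ideal (range (\<lambda>r. a * r))"
  unfolding right_ideal_def
proof (intro conjI ballI allI impI)
  show "0 \<in> range (\<lambda>r. a * r)"
    using rangeI[of "\<lambda>r. a * r" 0] by simp
  show "x + y \<in> range (\<lambda>r. a * r)" if x: "x \<in> range (\<lambda>r. a * r)" and y: "y \<in> range (\<lambda>r. a * r)" for x y
  proof -
    obtain s t where "x = a * s" "y = a * t"
      using x y by blast
    then show ?thesis
      using rangeI[of "\<lambda>r. a * r" "s + t"] by (simp add: distrib_left)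
  qed
  show "- x \<in> range (\<lambda>r. a * r)" if x: "x \<in> range (\<lambda>r. a * r)" for x
  proof -
    obtain s where "x = a * s"
      using x by blast
    then show ?thesis
      using rangeI[of "\<lambda>r. a * r" "- s"] by simp
  qed
  show "x * r \<in> range (\<lambda>r. a * r)" if x: "x \<in> range (\<lambda>r. a * r)" for r x
  proof -
    obtain s where "x = a * s"
      using x by blast
    then show ?thesis
      using rangeI[of "\<lambda>r. a * r" "s * r"] by (simp add: mult.assoc)
  qed
qed

lemma left_ideal_Union_chain:
  assumes "C \<noteq> {}" and ideals: "\<And>I. I \<in> C \<Longrightarrow> left_ideal I"
    and chain: "\<And>I J. I \<in> C \<Longrightarrow> J \<in> C \<Longrightarrow> I \<subseteq> J \<or> J \<subseteq> I"
  shows "left_ideal (\<Union>C)"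
  unfolding left_ideal_def
proof (intro conjI ballI allI impI)
  obtain I where "I \<in> C"
    using \<open>C \<noteq> {}\<close> by blast
  then show "0 \<in> \<Union>C"
    using ideals[of I] unfolding left_ideal_def by blast
  show "x + y \<in> \<Union>C" if x: "x \<in> \<Union>C" and y: "y \<in> \<Union>C" for x y
  proof -
    obtain I J where IJ: "I \<in> C" "J \<in> C" and "x \<in> I" "y \<in> J"
      using x y by blast
    then obtain K where "K \<in> C" "x \<in> K" "y \<in> K"
      using chain[OF IJ] by blast
    then show ?thesis
      using ideals[of K] unfolding left_ideal_def by blast
  qed
  show "- x \<in> \<Union>C" "r * x \<in> \<Union>C" if x: "x \<in> \<Union>C" for x r
  proof -
    obtain I where "I \<in> C" "x \<in> I"
      using x by blast
    then show "- x \<in> \<Union>C" "r * x \<in> \<Union>C"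
      using ideals[of I] unfolding left_ideal_def by blast+
  qed
qed

lemma left_ideal_in_maximal_left_ideal:
  assumes "left_ideal I" "1 \<notin> I"
  obtains M where "maximal_left_ideal M" "I \<subseteq> M"
proof -
  define \<A> where "\<A> = {K. left_ideal K \<and> I \<subseteq> K \<and> 1 \<notin> K}"
  have "\<exists>M\<in>\<A>. \<forall>K\<in>\<A>. M \<subseteq> K \<longrightarrow> K = M"
  proof (rule subset_Zorn_nonempty)
    show "\<A> \<noteq> {}"
      using assms unfolding \<A>_def by blast
    show "\<Union>C \<in> \<A>" if C: "C \<noteq> {}" "subset.chain \<A> C" for C
    proof -
      have "C \<subseteq> \<A>" "\<forall>K\<in>C. \<forall>K'\<in>C. K \<subseteq> K' \<or> K' \<subseteq> K"
        using C(2) unfolding subset.chain_def by auto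
      then have "left_ideal (\<Union>C)"
        using left_ideal_Union_chain[OF C(1)] unfolding \<A>_def by blast
      moreover have "I \<subseteq> \<Union>C" "1 \<notin> \<Union>C"
        using C(1) \<open>C \<subseteq> \<A>\<close> unfolding \<A>_def by blast+
      ultimately show ?thesis
        unfolding \<A>_def by blast
    qed
  qed
  then obtain M where M: "M \<in> \<A>" and max: "\<And>K. K \<in> \<A> \<Longrightarrow> M \<subseteq> K \<Longrightarrow> K = M"
    by blast
  have "maximal_left_ideal M"
    unfolding maximal_left_ideal_def
  proof (intro conjI allI impI)
    show "left_ideal M" "M \<noteq> UNIV"
      using M unfolding \<A>_def by auto
    show "K = M" if "left_ideal K \<and> M \<subseteq> K \<and> K \<noteq> UNIV" for K
      using that M max[of K] left_ideal_eq_UNIV_iff[of K] unfolding \<A>_def by blast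
  qed
  then show thesis
    using that M unfolding \<A>_def by blast
qed

lemma jacobson_left_invertible:
  assumes "z \<in> jacobson"
  shows "\<exists>u. u * (1 - z) = 1"
proof (rule ccontr)
  assume no_inverse: "\<nexists>u. u * (1 - z) = 1"
  have "1 \<notin> range (\<lambda>r. r * (1 - z))"
    using no_inverse by (metis rangeE)
  then obtain M where M: "maximal_left_ideal M" and "range (\<lambda>r. r * (1 - z)) \<subseteq> M"
    using left_ideal_in_maximal_left_ideal left_ideal_principal by metis
  then have "1 - z \<in> M"
    by (metis mult_1_left rangeI subsetD)
  moreover have "z \<in> M"
    using assms M unfolding jacobson_def by blast
  ultimately have "1 \<in> M"
    using M unfolding maximal_left_ideal_def left_ideal_def by (metis diff_add_cancel)
  then show False
    using M left_ideal_eq_UNIV_iff unfolding maximal_left_ideal_def by blast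
qed

lemma jacobson_idempotent_eq_0:
  assumes "f \<in> jacobson" "f * f = f"
  shows "f = 0"
proof -
  obtain u where u: "u * (1 - f) = 1"
    using jacobson_left_invertible[OF assms(1)] by blast
  have "f = u * ((1 - f) * f)"
    using u by (simp add: mult.assoc[symmetric])
  also have "\<dots> = 0"
    using assms(2) by (simp add: left_diff_distrib)
  finally show ?thesis .
qed

lemma NJ_symmetricD:
  "NJ_symmetric TYPE('a::ring_1) \<Longrightarrow> (a::'a) * b * c \<in> nilpotents \<Longrightarrow> b * a * c \<in> jacobson"
  unfolding NJ_symmetric_def by simp

lemma square_zero_in_nilpotents: "x * x = 0 \<Longrightarrow> x \<in> nilpotents"
  unfolding nilpotents_def by (auto simp: power2_eq_square intro: exI[of _ 2])

lemma zero_in_nilpotents: "0 \<in> nilpotents"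
  by (rule square_zero_in_nilpotents) simp

lemma maximal_left_ideal_complement:
  assumes M: "maximal_left_ideal M" and L: "left_ideal L" "\<not> L \<subseteq> M"
  obtains e f where "e \<in> M" "f \<in> L" "e + f = 1"
proof -
  have "left_ideal M"
    using M unfolding maximal_left_ideal_def by blast
  then have sum: "left_ideal (M + L)"
    using L(1) by (rule left_ideal_set_plus)
  have "M \<subseteq> M + L" "L \<subseteq> M + L"
    using set_plus_intro[of _ M 0 L] set_plus_intro[of 0 M _ L] L(1) \<open>left_ideal M\<close>
    unfolding left_ideal_def by auto
  then have "M + L = UNIV"
    using M sum L(2) unfolding maximal_left_ideal_def by blast
  then show thesis
    using that by (metis UNIV_I set_plus_elim)
qed

lemma maximal_right_ideal_complement:
  assumes M: "maximal_right_ideal M" and L: "right_ideal L" "\<not> L \<subseteq> M"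
  obtains e f where "e \<in> M" "f \<in> L" "e + f = 1"
proof -
  have "right_ideal M"
    using M unfolding maximal_right_ideal_def by blast
  then have sum: "right_ideal (M + L)"
    using L(1) by (rule right_ideal_set_plus)
  have "M \<subseteq> M + L" "L \<subseteq> M + L"
    using set_plus_intro[of _ M 0 L] set_plus_intro[of 0 M _ L] L(1) \<open>right_ideal M\<close>
    unfolding right_ideal_def by auto
  then have "M + L = UNIV"
    using M sum L(2) unfolding maximal_right_ideal_def by blast
  then show thesis
    using that by (metis UNIV_I set_plus_elim)
qed

lemma left_ideal_complement_annihilator:
  assumes M: "left_ideal M" and L: "left_ideal L" and "M \<inter> L = {0}"
    and "e \<in> M" "f \<in> L" "e + f = 1"
  shows "M = {x. x * f = 0}"
proof (intro set_eqI iffI; simp)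
  fix x
  have split: "x = x * e + x * f"
    using \<open>e + f = 1\<close> by (metis distrib_left mult_1_right)
  show "x * f = 0" if "x \<in> M"
  proof -
    have "x * f \<in> M"
      using split that left_ideal_diff[OF M that left_ideal_mult[OF M \<open>e \<in> M\<close>, of x]]
      by (metis add_diff_cancel_left')
    moreover have "x * f \<in> L"
      using left_ideal_mult[OF L \<open>f \<in> L\<close>] .
    ultimately show ?thesis
      using \<open>M \<inter> L = {0}\<close> by blast
  qed
  show "x \<in> M" if "x * f = 0"
    using split that left_ideal_mult[OF M \<open>e \<in> M\<close>, of x] by simp
qed

lemma right_ideal_complement_annihilator:
  assumes M: "right_ideal M" and L: "right_ideal L" and "M \<inter> L = {0}"
    and "e \<in> M" "f \<in> L" "e + f = 1"
  shows "M = {x. f * x = 0}"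
proof (intro set_eqI iffI; simp)
  fix x
  have split: "x = e * x + f * x"
    using \<open>e + f = 1\<close> by (metis distrib_right mult_1_left)
  show "f * x = 0" if "x \<in> M"
  proof -
    have "f * x \<in> M"
      using split that right_ideal_diff[OF M that right_ideal_mult[OF M \<open>e \<in> M\<close>, of x]]
      by (metis add_diff_cancel_left')
    moreover have "f * x \<in> L"
      using right_ideal_mult[OF L \<open>f \<in> L\<close>] .
    ultimately show ?thesis
      using \<open>M \<inter> L = {0}\<close> by blast
  qed
  show "x \<in> M" if "f * x = 0"
    using split that right_ideal_mult[OF M \<open>e \<in> M\<close>, of x] by simp
qed

lemma maximal_left_ideal_not_essential_two_sided:
  assumes NJ: "NJ_symmetric TYPE('a::ring_1)"
    and maximal: "maximal_left_ideal (M::'a set)" and not_ess: "\<not> essential_left_ideal M"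
  shows "two_sided_ideal M"
proof -
  have M: "left_ideal M"
    using maximal unfolding maximal_left_ideal_def by blast
  obtain L where L: "left_ideal L" "L \<noteq> {0}" and disjoint: "M \<inter> L = {0}"
    using not_ess M unfolding essential_left_ideal_def by blast
  then have "\<not> L \<subseteq> M"
    by (metis Int_absorb1 Int_commute)
  then obtain e f where ef: "e \<in> M" "f \<in> L" "e + f = 1"
    using maximal_left_ideal_complement[OF maximal L(1)] by blast
  have M_ann: "M = {x. x * f = 0}"
    using left_ideal_complement_annihilator[OF M L(1) disjoint ef] .
  have "L = {x. x * e = 0}"
    by (rule left_ideal_complement_annihilator[OF L(1) M]) (use disjoint ef in \<open>auto simp: add.commute\<close>)
  then have fe: "f * e = 0"
    using ef(2) by blast
  have erf: "e * r * f = 0" for r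
  proof -
    have "(e * r * f) * (e * r * f) = e * r * (f * e) * r * f"
      by (simp add: mult.assoc)
    then have "e * r * f \<in> nilpotents"
      using fe square_zero_in_nilpotents by simp
    then have "e * r * f \<in> jacobson"
      using NJ_symmetricD[OF NJ, of 1 "e * r * f" 1] by simp
    then have "e * r * f \<in> M"
      using maximal unfolding jacobson_def by blast
    moreover have "e * r * f \<in> L"
      using left_ideal_mult[OF L(1) ef(2), of "e * r"] .
    ultimately show ?thesis
      using disjoint by blast
  qed
  have "right_ideal M"
    unfolding right_ideal_def
  proof (intro conjI allI impI)
    show "0 \<in> M" "\<forall>x\<in>M. \<forall>y\<in>M. x + y \<in> M" "\<forall>x\<in>M. - x \<in> M"
      using M unfolding left_ideal_def by auto
    show "x * r \<in> M" if "x \<in> M" for x r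
    proof -
      have "x * f = 0"
        using that M_ann by blast
      have "x = x * (e + f)"
        using ef(3) by simp
      also have "\<dots> = x * e"
        using \<open>x * f = 0\<close> by (simp add: distrib_left)
      finally have "x * r * f = x * (e * r * f)"
        by (metis mult.assoc)
      then have "x * r * f = 0"
        using erf by simp
      then show ?thesis
        using M_ann by blast
    qed
  qed
  with M show ?thesis
    unfolding two_sided_ideal_def by blast
qed

lemma maximal_right_ideal_not_essential_two_sided:
  assumes NJ: "NJ_symmetric TYPE('a::ring_1)"
    and maximal: "maximal_right_ideal (M::'a set)" and not_ess: "\<not> essential_right_ideal M"
  shows "two_sided_ideal M"
proof -
  have M: "right_ideal M"
    using maximal unfolding maximal_right_ideal_def by blast
  obtain L where L: "right_ideal L" "L \<noteq> {0}" and disjoint: "M \<inter> L = {0}"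
    using not_ess M unfolding essential_right_ideal_def by blast
  then have "\<not> L \<subseteq> M"
    by (metis Int_absorb1 Int_commute)
  then obtain e f where ef: "e \<in> M" "f \<in> L" "e + f = 1"
    using maximal_right_ideal_complement[OF maximal L(1)] by blast
  have M_ann: "M = {x. f * x = 0}"
    using right_ideal_complement_annihilator[OF M L(1) disjoint ef] .
  have "L = {x. e * x = 0}"
    by (rule right_ideal_complement_annihilator[OF L(1) M]) (use disjoint ef in \<open>auto simp: add.commute\<close>)
  then have ef0: "e * f = 0"
    using ef(2) by blast
  have ff: "f * f = f"
    using ef(3) ef0 by (metis add_0 distrib_right mult_1_left)
  have fre: "f * r * e = 0" for r
  proof (rule ccontr)
    assume nonzero: "f * r * e \<noteq> 0"
    have "f * r * e \<in> L"
      using right_ideal_mult[OF L(1) ef(2)] by (simp add: mult.assoc)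
    then have "f * r * e \<notin> M"
      using nonzero disjoint by blast
    then have "\<not> range (\<lambda>t. f * r * e * t) \<subseteq> M"
      using rangeI[of "\<lambda>t. f * r * e * t" 1] by auto
    then obtain m t where m: "m \<in> M" and one: "m + f * r * e * t = 1"
      using maximal_right_ideal_complement[OF maximal right_ideal_principal] by blast
    have "f * m = 0"
      using m M_ann by blast
    have "f = f * (m + f * r * e * t)"
      using one by simp
    also have "\<dots> = f * m + (f * f) * r * e * t"
      by (simp add: distrib_left mult.assoc)
    also have "\<dots> = f * r * (e * t)"
      using \<open>f * m = 0\<close> ff by (simp add: mult.assoc)
    finally have f_eq: "f = f * r * (e * t)" .
    have "f * e = 0"
      using ef(1) M_ann by blast
    moreover have "r * f * (e * t) = r * (f * e) * t"
      by (simp add: mult.assoc)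
    ultimately have "r * f * (e * t) \<in> nilpotents"
      using zero_in_nilpotents by simp
    then have "f \<in> jacobson"
      using NJ_symmetricD[OF NJ] f_eq by metis
    then have "f = 0"
      using ff by (rule jacobson_idempotent_eq_0)
    with nonzero show False
      by simp
  qed
  have "left_ideal M"
    unfolding left_ideal_def
  proof (intro conjI allI impI)
    show "0 \<in> M" "\<forall>x\<in>M. \<forall>y\<in>M. x + y \<in> M" "\<forall>x\<in>M. - x \<in> M"
      using M unfolding right_ideal_def by auto
    show "r * x \<in> M" if "x \<in> M" for r x
    proof -
      have "f * x = 0"
        using that M_ann by blast
      have "x = (e + f) * x"
        using ef(3) by simp
      also have "\<dots> = e * x"
        using \<open>f * x = 0\<close> by (simp add: distrib_right)
      finally have "r * x = r * (e * x)"
        by (rule arg_cong)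
      also have "\<dots> = (e + f) * r * (e * x)"
        using ef(3) by simp
      also have "\<dots> = e * (r * e * x) + f * r * e * x"
        by (simp add: distrib_right mult.assoc)
      also have "\<dots> = e * (r * e * x)"
        using fre by simp
      finally show ?thesis
        using right_ideal_mult[OF M ef(1)] by simp
    qed
  qed
  with M show ?thesis
    unfolding two_sided_ideal_def by blast
qed

theorem lemma2p7:
  assumes "NJ_symmetric TYPE('a::ring_1)"
  shows "(\<forall>M :: 'a set. maximal_left_ideal M \<and> \<not> essential_left_ideal M \<longrightarrow> two_sided_ideal M)
       \<and> (\<forall>M :: 'a set. maximal_right_ideal M \<and> \<not> essential_right_ideal M \<longrightarrow> two_sided_ideal M)"
  using maximal_left_ideal_not_essential_two_sided[OF assms]
    maximal_right_ideal_not_essential_two_sided[OF assms]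
  by blast

end
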